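(* Let $\mathcal{X},\mathcal{Y},\mathcal{A},\mathcal{B}$ be systems with $\mathcal{X}$ trivial ($\mathsf{T}[\mathcal{X}]=\mathsf{I}$) and $\mathcal{A}$ classical ($\mathsf{T}[\mathcal{A}]=\mathsf{C}$), while $\mathcal{Y}$ and $\mathcal{B}$ have arbitrary types and dimensions. Then the resource type $\mathsf{I}\,\mathsf{T}[\mathcal{Y}]\rightarrow\mathsf{C}\,\mathsf{T}[\mathcal{B}]$ is $\mathsf{T}$-trivial: every nonsignaling resource $R_{\mathcal{A}\mathcal{B}|\mathcal{X}\mathcal{Y}}$ of this type (and these dimensions) is LOSR-free.
   Context: A system $\mathcal{H}$ is specified by a dimension $d[\mathcal{H}]\ge 1$ (Hilbert space $\mathbb{C}^{d[\mathcal{H}]}$ with computational basis $\{|i\rangle\}$) and a type $\mathsf{T}[\mathcal{H}]\in\{\mathsf{I},\mathsf{C},\mathsf{Q}\}$ (trivial, classical, quantum); a system is trivial iff its dimension is $1$. $\mathsf{D}(\mathcal{H})$ denotes density matrices. A (bipartite nonsignaling) resource with Alice's input $\mathcal{X}$ and output $\mathcal{A}$ and Bob's input $\mathcal{Y}$ and output $\mathcal{B}$ is a linear map $R$ from operators on $\mathcal{X}\otimes\mathcal{Y}$ to operators on $\mathcal{A}\otimes\mathcal{B}$ which is completely positive, satisfies $\mathrm{tr}\,R[\xi\otimes\psi]=1$ for all $\xi\in\mathsf{D}(\mathcal{X}),\psi\in\mathsf{D}(\mathcal{Y})$, and is nonsignaling: $\mathrm{tr}_{\mathcal{A}}R[\xi\otimes\psi]$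 does not depend on $\xi$ and $\mathrm{tr}_{\mathcal{B}}R[\xi\otimes\psi]$ does not depend on $\psi$. If an output, say $\mathcal{A}$, is classical then $\langle i_{\mathcal{A}}|R[\xi\otimes\psi]|j_{\mathcal{A}}\rangle=0$ for all $i\ne j$, $\xi,\psi$; if an input, say $\mathcal{X}$, is classical then $R[|i_{\mathcal{X}}\rangle\langle j_{\mathcal{X}}|\otimes\psi]=0$ for all $i\neq j$ and $\psi$ (analogously for $\mathcal{B}$, $\mathcal{Y}$). The type of $R$ is written $\mathsf{T}[\mathcal{X}]\mathsf{T}[\mathcal{Y}]\rightarrow\mathsf{T}[\mathcal{A}]\mathsf{T}[\mathcal{B}]$. A single-party resource $R_{\mathcal{A}|\mathcal{X}}$ is a CPTP map from operators on $\mathcal{X}$ to operators on $\mathcal{A}$ satisfying the analogous classicality constraints. A resource is LOSR-free if $R_{\mathcal{A}\mathcal{B}|\mathcal{X}\mathcal{Y}}=\sum_i p_i\,R^i_{\mathcal{A}|\mathcal{X}}\otimes R^i_{\mathcal{B}|\mathcal{Y}}$ for a probability distribution $(p_i)$ and single-party resources of the corresponding types and dimensions. A resource type is $\mathsf{T}$-trivial if every resource of that type is LOSR-free. *)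

theory Defs
  imports Complex_Main "Jordan_Normal_Form.Matrix"
begin

text \<open>Operators on C^d are complex d x d matrices (Jordan_Normal_Form mat).
  Composite system C^d1 (x) C^d2: the basis vector |i>|j> has index i*d2+j.\<close>

datatype stype = TI | TC | TQ   (* trivial, classical, quantum *)

type_synonym sys = "nat \<times> stype"   (* dimension, type *)

definition valid_sys :: "sys \<Rightarrow> bool" where
  "valid_sys S \<longleftrightarrow> fst S \<ge> 1 \<and> (snd S = TI \<longleftrightarrow> fst S = 1)"

definition tr :: "complex mat \<Rightarrow> complex" where
  "tr M = (\<Sum>i<dim_row M. M $$ (i,i))"

definition psd :: "nat \<Rightarrow> complex mat \<Rightarrow> bool" where
  "psd d M \<longleftrightarrow> M \<in> carrier_mat d d \<and>
     (\<forall>v \<in> carrier_vec d.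
        let q = (\<Sum>i<d. \<Sum>j<d. cnj (v $ i) * M $$ (i,j) * v $ j) in Im q = 0 \<and> Re q \<ge> 0)"

definition density :: "nat \<Rightarrow> complex mat \<Rightarrow> bool" where
  "density d M \<longleftrightarrow> psd d M \<and> tr M = 1"

definition ketbra :: "nat \<Rightarrow> nat \<Rightarrow> nat \<Rightarrow> complex mat" where
  "ketbra d i j = mat d d (\<lambda>(r,c). if r = i \<and> c = j then 1 else 0)"

definition tensor_mat :: "nat \<Rightarrow> nat \<Rightarrow> complex mat \<Rightarrow> complex mat \<Rightarrow> complex mat" where
  "tensor_mat d1 d2 A B =
     mat (d1*d2) (d1*d2) (\<lambda>(r,c). A $$ (r div d2, c div d2) * B $$ (r mod d2, c mod d2))"

definition ptrace_first :: "nat \<Rightarrow> nat \<Rightarrow> complex mat \<Rightarrow> complex mat" where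
  "ptrace_first d1 d2 M = mat d2 d2 (\<lambda>(b,b'). \<Sum>a<d1. M $$ (a*d2+b, a*d2+b'))"

definition ptrace_second :: "nat \<Rightarrow> nat \<Rightarrow> complex mat \<Rightarrow> complex mat" where
  "ptrace_second d1 d2 M = mat d1 d1 (\<lambda>(a,a'). \<Sum>b<d2. M $$ (a*d2+b, a'*d2+b))"

definition linear_map :: "nat \<Rightarrow> nat \<Rightarrow> (complex mat \<Rightarrow> complex mat) \<Rightarrow> bool" where
  "linear_map din dout R \<longleftrightarrow>
     (\<forall>M \<in> carrier_mat din din. R M \<in> carrier_mat dout dout) \<and>
     (\<forall>M \<in> carrier_mat din din. \<forall>N \<in> carrier_mat din din. R (M + N) = R M + R N) \<and>
     (\<forall>c. \<forall>M \<in> carrier_mat din din. R (c \<cdot>\<^sub>m M) = c \<cdot>\<^sub>m R M)"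

text \<open>(id_k (x) R) applied to an operator on C^k (x) C^din.\<close>
definition ampl :: "nat \<Rightarrow> nat \<Rightarrow> nat \<Rightarrow> (complex mat \<Rightarrow> complex mat) \<Rightarrow> complex mat \<Rightarrow> complex mat" where
  "ampl k din dout R M = mat (k*dout) (k*dout) (\<lambda>(r,c).
      R (mat din din (\<lambda>(s,t). M $$ ((r div dout)*din + s, (c div dout)*din + t)))
        $$ (r mod dout, c mod dout))"

definition CP :: "nat \<Rightarrow> nat \<Rightarrow> (complex mat \<Rightarrow> complex mat) \<Rightarrow> bool" where
  "CP din dout R \<longleftrightarrow> (\<forall>k \<ge> 1. \<forall>M. psd (k*din) M \<longrightarrow> psd (k*dout) (ampl k din dout R M))"

text \<open>Bipartite nonsignaling resource with Alice input X, output A, Bob input Y, output B.\<close>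
definition is_resource :: "sys \<Rightarrow> sys \<Rightarrow> sys \<Rightarrow> sys \<Rightarrow> (complex mat \<Rightarrow> complex mat) \<Rightarrow> bool" where
  "is_resource X Y A B R \<longleftrightarrow>
    (let dX = fst X; dY = fst Y; dA = fst A; dB = fst B in
     linear_map (dX*dY) (dA*dB) R \<and> CP (dX*dY) (dA*dB) R \<and>
     (\<forall>\<xi> \<psi>. density dX \<xi> \<and> density dY \<psi> \<longrightarrow> tr (R (tensor_mat dX dY \<xi> \<psi>)) = 1) \<and>
     (\<forall>\<xi> \<xi>' \<psi>. density dX \<xi> \<and> density dX \<xi>' \<and> density dY \<psi> \<longrightarrow>
        ptrace_first dA dB (R (tensor_mat dX dY \<xi> \<psi>)) = ptrace_first dA dB (R (tensor_mat dX dY \<xi>' \<psi>))) \<and>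
     (\<forall>\<xi> \<psi> \<psi>'. density dX \<xi> \<and> density dY \<psi> \<and> density dY \<psi>' \<longrightarrow>
        ptrace_second dA dB (R (tensor_mat dX dY \<xi> \<psi>)) = ptrace_second dA dB (R (tensor_mat dX dY \<xi> \<psi>'))) \<and>
     (snd A = TC \<longrightarrow> (\<forall>\<xi> \<psi>. density dX \<xi> \<and> density dY \<psi> \<longrightarrow>
        (\<forall>i<dA. \<forall>j<dA. i \<noteq> j \<longrightarrow> (\<forall>b<dB. \<forall>b'<dB.
           R (tensor_mat dX dY \<xi> \<psi>) $$ (i*dB+b, j*dB+b') = 0)))) \<and>
     (snd B = TC \<longrightarrow> (\<forall>\<xi> \<psi>. density dX \<xi> \<and> density dY \<psi> \<longrightarrow>
        (\<forall>i<dB. \<forall>j<dB. i \<noteq> j \<longrightarrow> (\<forall>a<dA. \<forall>a'<dA.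
           R (tensor_mat dX dY \<xi> \<psi>) $$ (a*dB+i, a'*dB+j) = 0)))) \<and>
     (snd X = TC \<longrightarrow> (\<forall>\<psi>. density dY \<psi> \<longrightarrow>
        (\<forall>i<dX. \<forall>j<dX. i \<noteq> j \<longrightarrow> R (tensor_mat dX dY (ketbra dX i j) \<psi>) = 0\<^sub>m (dA*dB) (dA*dB)))) \<and>
     (snd Y = TC \<longrightarrow> (\<forall>\<xi>. density dX \<xi> \<longrightarrow>
        (\<forall>i<dY. \<forall>j<dY. i \<noteq> j \<longrightarrow> R (tensor_mat dX dY \<xi> (ketbra dY i j)) = 0\<^sub>m (dA*dB) (dA*dB)))))"

definition is_single :: "sys \<Rightarrow> sys \<Rightarrow> (complex mat \<Rightarrow> complex mat) \<Rightarrow> bool" where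
  "is_single X A R \<longleftrightarrow>
    (let dX = fst X; dA = fst A in
     linear_map dX dA R \<and> CP dX dA R \<and>
     (\<forall>M \<in> carrier_mat dX dX. tr (R M) = tr M) \<and>
     (snd A = TC \<longrightarrow> (\<forall>\<xi>. density dX \<xi> \<longrightarrow> (\<forall>i<dA. \<forall>j<dA. i \<noteq> j \<longrightarrow> R \<xi> $$ (i,j) = 0))) \<and>
     (snd X = TC \<longrightarrow> (\<forall>i<dX. \<forall>j<dX. i \<noteq> j \<longrightarrow> R (ketbra dX i j) = 0\<^sub>m dA dA)))"

text \<open>(RA (x) RB)(M), the linear extension of RA(|x><x'|) (x) RB(|y><y'|).\<close>
definition tensor_map :: "nat \<Rightarrow> nat \<Rightarrow> nat \<Rightarrow> nat \<Rightarrow>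
    (complex mat \<Rightarrow> complex mat) \<Rightarrow> (complex mat \<Rightarrow> complex mat) \<Rightarrow> complex mat \<Rightarrow> complex mat" where
  "tensor_map dX dY dA dB RA RB M = mat (dA*dB) (dA*dB) (\<lambda>(r,c).
     \<Sum>x<dX. \<Sum>x'<dX. \<Sum>y<dY. \<Sum>y'<dY.
       M $$ (x*dY+y, x'*dY+y') * RA (ketbra dX x x') $$ (r div dB, c div dB)
         * RB (ketbra dY y y') $$ (r mod dB, c mod dB))"

definition LOSR_free :: "sys \<Rightarrow> sys \<Rightarrow> sys \<Rightarrow> sys \<Rightarrow> (complex mat \<Rightarrow> complex mat) \<Rightarrow> bool" where
  "LOSR_free X Y A B R \<longleftrightarrow>
    (\<exists>n (p :: nat \<Rightarrow> real) RA RB.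
       (\<forall>i<n. p i \<ge> 0) \<and> (\<Sum>i<n. p i) = 1 \<and>
       (\<forall>i<n. is_single X A (RA i) \<and> is_single Y B (RB i)) \<and>
       (\<forall>M \<in> carrier_mat (fst X * fst Y) (fst X * fst Y).
          R M = mat (fst A * fst B) (fst A * fst B) (\<lambda>rc.
             \<Sum>i<n. complex_of_real (p i) *
               tensor_map (fst X) (fst Y) (fst A) (fst B) (RA i) (RB i) M $$ rc)))"

definition T_trivial :: "sys \<Rightarrow> sys \<Rightarrow> sys \<Rightarrow> sys \<Rightarrow> bool" where
  "T_trivial X Y A B \<longleftrightarrow> (\<forall>R. is_resource X Y A B R \<longrightarrow> LOSR_free X Y A B R)"

end

theory Submission
  imports Defs
begin

(* Since Alice's input is trivial and her output is classical, R sends Bob's input M to a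
   block-diagonal operator sum_a |a><a| (x) R_a(M). No-signalling from Bob to Alice makes
   p_a = tr R_a(psi) independent of the density psi, and since densities span all matrices,
   tr R_a(M) = p_a tr M. Positivity forces R_a = 0 when p_a = 0; otherwise R_a / p_a is a
   compression of id (x) R, hence completely positive, and trace preserving. So R is the
   mixture, with weights p_a, of Alice deterministically outputting a and Bob applying
   R_a / p_a. *)

lemma sum_lessThan_one_point:
  fixes f :: "nat \<Rightarrow> 'a::comm_monoid_add"
  assumes "i < d" and "\<And>k. k < d \<Longrightarrow> k \<noteq> i \<Longrightarrow> f k = 0"
  shows "(\<Sum>k<d. f k) = f i"
proof -
  have "(\<Sum>k<d. f k) = (\<Sum>k\<in>{i}. f k)"
    by (rule sum.mono_neutral_right) (use assms in auto)
  then show ?thesis by simp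
qed

lemma sum_lessThan_two_points:
  fixes f :: "nat \<Rightarrow> 'a::comm_monoid_add"
  assumes "i < d" "j < d" "i \<noteq> j"
    and "\<And>k. k < d \<Longrightarrow> k \<noteq> i \<Longrightarrow> k \<noteq> j \<Longrightarrow> f k = 0"
  shows "(\<Sum>k<d. f k) = f i + f j"
proof -
  have "(\<Sum>k<d. f k) = (\<Sum>k\<in>{i,j}. f k)"
    by (rule sum.mono_neutral_right) (use assms in auto)
  then show ?thesis using assms(3) by simp
qed

lemma sum_lessThan_mult_split:
  fixes f :: "nat \<Rightarrow> 'a::comm_monoid_add"
  shows "(\<Sum>r<m*n. f r) = (\<Sum>a<m. \<Sum>b<n. f (a*n + b))"
  using sum.nat_group[of f n m] by (simp add: sum.atLeastLessThan_shift_0 atLeast0LessThan comp_def add.commute)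

lemma mult_add_less_mult: "a < m \<Longrightarrow> b < n \<Longrightarrow> a*n + b < m*(n::nat)"
proof -
  assume "a < m" "b < n"
  then have "a*n + b < Suc a * n" by simp
  also have "\<dots> \<le> m * n" using \<open>a < m\<close> by (intro mult_le_mono1) simp
  finally show ?thesis .
qed

definition quad_form :: "nat \<Rightarrow> complex mat \<Rightarrow> (nat \<Rightarrow> complex) \<Rightarrow> complex" where
  "quad_form d M v = (\<Sum>i<d. \<Sum>j<d. cnj (v i) * M $$ (i,j) * v j)"

lemma psd_iff_quad_form:
  "psd d M \<longleftrightarrow>
    M \<in> carrier_mat d d \<and> (\<forall>v. Im (quad_form d M v) = 0 \<and> 0 \<le> Re (quad_form d M v))"
proof -
  have vec: "quad_form d M (\<lambda>i. vec d v $ i) = quad_form d M v" for v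
    unfolding quad_form_def by (intro sum.cong) auto
  have "(\<forall>w \<in> carrier_vec d. Im (quad_form d M (\<lambda>i. w $ i)) = 0 \<and> 0 \<le> Re (quad_form d M (\<lambda>i. w $ i)))
      \<longleftrightarrow> (\<forall>v. Im (quad_form d M v) = 0 \<and> 0 \<le> Re (quad_form d M v))"
    by (metis vec vec_carrier)
  then show ?thesis unfolding psd_def Let_def quad_form_def by simp
qed

lemma psd_carrier: "psd d M \<Longrightarrow> M \<in> carrier_mat d d"
  unfolding psd_def by simp

lemma psd_quad_form: "psd d M \<Longrightarrow> Im (quad_form d M v) = 0 \<and> 0 \<le> Re (quad_form d M v)"
  unfolding psd_iff_quad_form by blast

lemma psd_diag_nonneg:
  assumes "psd d M" "i < d"
  shows "Im (M $$ (i,i)) = 0 \<and> 0 \<le> Re (M $$ (i,i))"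
proof -
  let ?e = "\<lambda>k. if k = i then 1 else 0"
  have row: "(\<Sum>l<d. cnj (?e k) * M $$ (k,l) * ?e l) = cnj (?e k) * M $$ (k,i)" for k
    using assms(2) by (subst sum_lessThan_one_point[of i]) auto
  have "quad_form d M ?e = M $$ (i,i)"
    unfolding quad_form_def row using assms(2) by (subst sum_lessThan_one_point[of i]) auto
  then show ?thesis using psd_quad_form[OF assms(1)] by metis
qed

lemma affine_nonneg_slope_zero:
  fixes a b :: real
  assumes "\<And>s. 0 \<le> s * a + b"
  shows "a = 0"
proof (rule ccontr)
  assume "a \<noteq> 0"
  have "0 \<le> (-(\<bar>b\<bar> + 1) / a) * a + b" by (rule assms)
  also have "\<dots> = -(\<bar>b\<bar> + 1) + b" using \<open>a \<noteq> 0\<close> by simp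
  finally show False by linarith
qed

lemma nonneg_conj_affine_coeff_zero:
  fixes x y m :: complex
  assumes "\<And>t. Im (cnj t * x + t * y + m) = 0 \<and> 0 \<le> Re (cnj t * x + t * y + m)"
  shows "x = 0"
proof -
  have "0 \<le> s * (Re x + Re y) + Re m" for s :: real
    using assms[of "of_real s"] by (simp add: algebra_simps)
  then have re: "Re x + Re y = 0" by (rule affine_nonneg_slope_zero)
  have "0 \<le> s * (Im x - Im y) + Re m" for s :: real
    using assms[of "\<i> * of_real s"] by (simp add: algebra_simps)
  then have im: "Im x - Im y = 0" by (rule affine_nonneg_slope_zero)
  have "Im x + Im y + Im m = 0" "Im m = 0" "- Re x + Re y + Im m = 0"
    using assms[of 1] assms[of 0] assms[of \<i>] by simp_all
  then show ?thesis using re im by (simp add: complex_eq_iff)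
qed

text \<open>Test against \<open>t e\<^sub>i + e\<^sub>j\<close> for all complex \<open>t\<close>.\<close>
lemma psd_zero_diag_row:
  assumes "psd d M" "i < d" "j < d" "M $$ (i,i) = 0"
  shows "M $$ (i,j) = 0"
proof (cases "i = j")
  case False
  show ?thesis
  proof (rule nonneg_conj_affine_coeff_zero)
    fix t
    let ?v = "\<lambda>k. if k = i then t else if k = j then 1 else 0 :: complex"
    have row: "(\<Sum>l<d. cnj (?v k) * M $$ (k,l) * ?v l) = cnj (?v k) * M $$ (k,i) * t + cnj (?v k) * M $$ (k,j)" for k
      using assms(2,3) False by (subst sum_lessThan_two_points[of i d j]) auto
    have "quad_form d M ?v = cnj t * M $$ (i,j) + t * M $$ (j,i) + M $$ (j,j)"
      unfolding quad_form_def row using assms(2-4) False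
      by (subst sum_lessThan_two_points[of i d j]) (auto simp: algebra_simps)
    then show "Im (cnj t * M $$ (i,j) + t * M $$ (j,i) + M $$ (j,j)) = 0 \<and>
        0 \<le> Re (cnj t * M $$ (i,j) + t * M $$ (j,i) + M $$ (j,j))"
      using psd_quad_form[OF assms(1)] by metis
  qed
qed (use assms in simp)

lemma density_carrier: "density d \<psi> \<Longrightarrow> \<psi> \<in> carrier_mat d d"
  unfolding density_def by (simp add: psd_carrier)

lemma ketbra_carrier [simp]: "ketbra d i j \<in> carrier_mat d d"
  unfolding ketbra_def by simp

lemma density_rank_one:
  fixes w :: "nat \<Rightarrow> complex" and t :: real
  assumes "t \<ge> 0" "t * (\<Sum>k<d. (cmod (w k))\<^sup>2) = 1"
  shows "density d (mat d d (\<lambda>(r,c). of_real t * (w r * cnj (w c))))"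
    (is "density d ?D")
proof -
  have "quad_form d ?D v = of_real (t * (cmod (\<Sum>i<d. cnj (v i) * w i))\<^sup>2)" for v
  proof -
    have "quad_form d ?D v = of_real t * ((\<Sum>i<d. cnj (v i) * w i) * cnj (\<Sum>j<d. cnj (v j) * w j))"
      unfolding quad_form_def by (simp add: sum_product sum_distrib_left algebra_simps)
    then show ?thesis by (simp only: complex_norm_square[symmetric] of_real_mult)
  qed
  then have "psd d ?D" unfolding psd_iff_quad_form using assms(1) by simp
  moreover have "tr ?D = (\<Sum>k<d. of_real t * (w k * cnj (w k)))"
    unfolding tr_def by simp
  then have "tr ?D = of_real (t * (\<Sum>k<d. (cmod (w k))\<^sup>2))"
    by (simp only: complex_norm_square[symmetric] sum_distrib_left of_real_mult of_real_sum)
  ultimately show ?thesis unfolding density_def using assms(2) by simp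
qed

lemma density_ketbra:
  assumes "i < d"
  shows "density d (ketbra d i i)"
proof -
  let ?e = "\<lambda>k. if k = i then 1 else 0 :: complex"
  have "ketbra d i i = mat d d (\<lambda>(r,c). of_real 1 * (?e r * cnj (?e c)))"
    unfolding ketbra_def by (intro eq_matI) auto
  moreover have "1 * (\<Sum>k<d. (cmod (?e k))\<^sup>2) = 1"
    using assms by (subst sum_lessThan_one_point[of i]) auto
  ultimately show ?thesis using density_rank_one[where t = 1 and w = ?e] by simp
qed

lemma density_unit: "density 1 (1\<^sub>m 1)"
proof -
  have "1\<^sub>m 1 = ketbra 1 0 0" unfolding ketbra_def by (intro eq_matI) auto
  then show ?thesis using density_ketbra[of 0 1] by simp
qed

lemma tensor_mat_unit_left: "\<psi> \<in> carrier_mat d d \<Longrightarrow> tensor_mat 1 d (1\<^sub>m 1) \<psi> = \<psi>"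
  unfolding tensor_mat_def by (intro eq_matI) auto

lemma linear_functional_ketbra_expansion:
  fixes F :: "complex mat \<Rightarrow> complex"
  assumes add: "\<And>M N. M \<in> carrier_mat d d \<Longrightarrow> N \<in> carrier_mat d d \<Longrightarrow> F (M + N) = F M + F N"
    and smult: "\<And>c M. M \<in> carrier_mat d d \<Longrightarrow> F (c \<cdot>\<^sub>m M) = c * F M"
    and M: "M \<in> carrier_mat d d"
  shows "F M = (\<Sum>i<d. \<Sum>j<d. M $$ (i,j) * F (ketbra d i j))"
proof -
  define restr where "restr S = mat d d (\<lambda>(r,c). if (r,c) \<in> S then M $$ (r,c) else 0)" for S
  have restr_carrier: "restr S \<in> carrier_mat d d" for S
    unfolding restr_def by simp
  have restr_expansion: "F (restr S) = (\<Sum>(i,j)\<in>S. M $$ (i,j) * F (ketbra d i j))"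
    if "finite S" "S \<subseteq> {..<d} \<times> {..<d}" for S
    using that
  proof (induction S rule: finite_induct)
    case empty
    have "restr {} = 0 \<cdot>\<^sub>m 0\<^sub>m d d"
      unfolding restr_def by (intro eq_matI) auto
    then show ?case using smult[of "0\<^sub>m d d" 0] by simp
  next
    case (insert p S)
    obtain i j where p: "p = (i,j)" by (cases p)
    have "restr (insert p S) = restr S + M $$ (i,j) \<cdot>\<^sub>m ketbra d i j"
      unfolding restr_def ketbra_def p using insert p by (intro eq_matI) auto
    then show ?case using insert p add[OF restr_carrier] smult by simp
  qed
  have "restr ({..<d} \<times> {..<d}) = M"
    unfolding restr_def using M by (intro eq_matI) auto
  then have "F M = (\<Sum>(i,j)\<in>{..<d} \<times> {..<d}. M $$ (i,j) * F (ketbra d i j))"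
    using restr_expansion[of "{..<d} \<times> {..<d}"] by simp
  then show ?thesis by (simp add: sum.cartesian_product)
qed

text \<open>The diagonal units are densities, and testing against the pure states
  \<open>(e\<^sub>i + c e\<^sub>j)/\<surd>2\<close> for \<open>c = 1, \<i>\<close> kills the off-diagonal units.\<close>
lemma linear_functional_zero_on_densities:
  fixes F :: "complex mat \<Rightarrow> complex"
  assumes add: "\<And>M N. M \<in> carrier_mat d d \<Longrightarrow> N \<in> carrier_mat d d \<Longrightarrow> F (M + N) = F M + F N"
    and smult: "\<And>c M. M \<in> carrier_mat d d \<Longrightarrow> F (c \<cdot>\<^sub>m M) = c * F M"
    and densities: "\<And>\<psi>. density d \<psi> \<Longrightarrow> F \<psi> = 0"
    and M: "M \<in> carrier_mat d d"
  shows "F M = 0"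
proof -
  define G where "G i j = F (ketbra d i j)" for i j
  have diag: "G i i = 0" if "i < d" for i
    unfolding G_def using densities density_ketbra that by blast
  have "G i j = 0" if ij: "i < d" "j < d" "i \<noteq> j" for i j
  proof -
    have pure: "cnj c * G i j + c * G j i = 0" if "cmod c = 1" for c
    proof -
      define w where "w k = (if k = i then 1 else if k = j then c else 0)" for k
      define D where "D = mat d d (\<lambda>(r,s). of_real (1/2) * (w r * cnj (w s)))"
      have "(\<Sum>k<d. (cmod (w k))\<^sup>2) = 2"
        using ij \<open>cmod c = 1\<close> by (subst sum_lessThan_two_points[of i d j]) (auto simp: w_def)
      then have "density d D"
        unfolding D_def by (intro density_rank_one) auto
      then have "F D = 0" by (rule densities)
      have row: "(\<Sum>l<d. D $$ (k,l) * G k l) = D $$ (k,i) * G k i + D $$ (k,j) * G k j"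
        if "k < d" for k
        using ij that by (subst sum_lessThan_two_points[of i d j]) (auto simp: D_def w_def)
      have "F D = (\<Sum>k<d. \<Sum>l<d. D $$ (k,l) * G k l)"
        unfolding G_def using D_def by (intro linear_functional_ketbra_expansion add smult) simp_all
      also have "\<dots> = (\<Sum>k<d. D $$ (k,i) * G k i + D $$ (k,j) * G k j)"
        by (intro sum.cong) (simp_all add: row)
      also have "\<dots> = D $$ (i,i) * G i i + D $$ (i,j) * G i j + (D $$ (j,i) * G j i + D $$ (j,j) * G j j)"
        using ij by (subst sum_lessThan_two_points[of i d j]) (auto simp: D_def w_def)
      also have "\<dots> = (1/2) * (cnj c * G i j + c * G j i)"
        using ij diag by (simp add: D_def w_def algebra_simps)
      finally show ?thesis using \<open>F D = 0\<close> by simp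
    qed
    have "G i j + G j i = 0" "- \<i> * G i j + \<i> * G j i = 0"
      using pure[of 1] pure[of \<i>] by simp_all
    then show ?thesis by (simp add: algebra_simps)
  qed
  then have "G i j = 0" if "i < d" "j < d" for i j
    using diag that by (cases "i = j") auto
  moreover have "F M = (\<Sum>i<d. \<Sum>j<d. M $$ (i,j) * G i j)"
    unfolding G_def by (rule linear_functional_ketbra_expansion[OF add smult M])
  ultimately show ?thesis by simp
qed

lemma tr_add: "M \<in> carrier_mat d d \<Longrightarrow> N \<in> carrier_mat d d \<Longrightarrow> tr (M + N) = tr M + tr N"
  unfolding tr_def by (simp add: sum.distrib)

lemma tr_smult: "M \<in> carrier_mat d d \<Longrightarrow> tr (c \<cdot>\<^sub>m M) = c * tr M"
  unfolding tr_def by (simp add: sum_distrib_left)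

lemma linear_map_carrier:
  "linear_map din dout R \<Longrightarrow> M \<in> carrier_mat din din \<Longrightarrow> R M \<in> carrier_mat dout dout"
  unfolding linear_map_def by blast

lemma linear_map_entry_add:
  assumes "linear_map din dout R" "M \<in> carrier_mat din din" "N \<in> carrier_mat din din"
    "r < dout" "c < dout"
  shows "R (M + N) $$ (r,c) = R M $$ (r,c) + R N $$ (r,c)"
proof -
  have "R (M + N) = R M + R N" using assms(1-3) unfolding linear_map_def by blast
  moreover have "R N \<in> carrier_mat dout dout" using assms(1,3) by (rule linear_map_carrier)
  ultimately show ?thesis using assms(4,5) by simp
qed

lemma linear_map_entry_smult:
  assumes "linear_map din dout R" "M \<in> carrier_mat din din" "r < dout" "c < dout"
  shows "R (x \<cdot>\<^sub>m M) $$ (r,c) = x * R M $$ (r,c)"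
proof -
  have "R (x \<cdot>\<^sub>m M) = x \<cdot>\<^sub>m R M" using assms(1,2) unfolding linear_map_def by blast
  moreover have "R M \<in> carrier_mat dout dout" using assms(1,2) by (rule linear_map_carrier)
  ultimately show ?thesis using assms(3,4) by simp
qed

lemma linear_map_entry_expansion:
  assumes "linear_map din dout R" "M \<in> carrier_mat din din" "r < dout" "c < dout"
  shows "R M $$ (r,c) = (\<Sum>i<din. \<Sum>j<din. M $$ (i,j) * R (ketbra din i j) $$ (r,c))"
  by (rule linear_functional_ketbra_expansion[where F = "\<lambda>M. R M $$ (r,c)", OF _ _ assms(2)])
    (simp_all add: assms linear_map_entry_add[OF assms(1) _ _ assms(3,4)]
      linear_map_entry_smult[OF assms(1) _ assms(3,4)])

lemma linear_map_entry_eq_0: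
  assumes "linear_map din dout R" "M \<in> carrier_mat din din" "r < dout" "c < dout"
    and "\<And>\<psi>. density din \<psi> \<Longrightarrow> R \<psi> $$ (r,c) = 0"
  shows "R M $$ (r,c) = 0"
  by (rule linear_functional_zero_on_densities[where F = "\<lambda>M. R M $$ (r,c)", OF _ _ _ assms(2)])
    (simp_all add: assms linear_map_entry_add[OF assms(1) _ _ assms(3,4)]
      linear_map_entry_smult[OF assms(1) _ assms(3,4)])

lemma CP_psd:
  assumes "CP din dout R" "linear_map din dout R" "psd din M"
  shows "psd dout (R M)"
proof -
  have M: "M \<in> carrier_mat din din" using assms(3) by (rule psd_carrier)
  have "mat din din (\<lambda>(s,t). M $$ (0*din + s, 0*din + t)) = M"
    using M by (intro eq_matI) auto
  then have "ampl 1 din dout R M = R M"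
    unfolding ampl_def using linear_map_carrier[OF assms(2) M] by (intro eq_matI) auto
  moreover have "psd (1 * din) M" using assms(3) by simp
  then have "psd (1 * dout) (ampl 1 din dout R M)"
    using assms(1) unfolding CP_def by (metis order_refl)
  ultimately show ?thesis by simp
qed

lemma sum_square_mono_neutral:
  assumes "finite A" "T \<subseteq> A"
    and "\<And>i j. i \<in> A \<Longrightarrow> j \<in> A \<Longrightarrow> i \<notin> T \<Longrightarrow> f i j = 0"
    and "\<And>i j. i \<in> A \<Longrightarrow> j \<in> A \<Longrightarrow> j \<notin> T \<Longrightarrow> f i j = 0"
  shows "(\<Sum>i\<in>A. \<Sum>j\<in>A. f i j) = (\<Sum>i\<in>T. \<Sum>j\<in>T. f i j)"
proof -
  have "(\<Sum>i\<in>A. \<Sum>j\<in>A. f i j) = (\<Sum>i\<in>T. \<Sum>j\<in>A. f i j)"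
    using assms(1,2) by (intro sum.mono_neutral_right) (auto simp: assms(3))
  also have "\<dots> = (\<Sum>i\<in>T. \<Sum>j\<in>T. f i j)"
    using assms(1,2) by (intro sum.cong refl sum.mono_neutral_right) (auto simp: assms(4))
  finally show ?thesis .
qed

text \<open>The quadratic form of \<open>N\<close> at \<open>v\<close> is \<open>s\<close> times that of \<open>M\<close> at \<open>v \<circ> h\<^sup>-\<^sup>1\<close>.\<close>
lemma psd_compression:
  fixes s :: real and h :: "nat \<Rightarrow> nat"
  assumes M: "psd m M" and N: "N \<in> carrier_mat n n" and s: "s \<ge> 0"
    and N_entries: "\<And>r c. r < n \<Longrightarrow> c < n \<Longrightarrow>
      N $$ (r,c) = (if r \<in> S \<and> c \<in> S then of_real s * M $$ (h r, h c) else 0)"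
    and inj: "inj_on h ({..<n} \<inter> S)" and h_less: "\<And>r. r < n \<Longrightarrow> r \<in> S \<Longrightarrow> h r < m"
  shows "psd n N"
  unfolding psd_iff_quad_form
proof (rule conjI[OF N], intro allI)
  fix v :: "nat \<Rightarrow> complex"
  define T where "T = {..<n} \<inter> S"
  define w where "w i = (if i \<in> h ` T then v (the_inv_into T h i) else 0)" for i
  have hT: "h ` T \<subseteq> {..<m}" using h_less unfolding T_def by auto
  have w_h: "w (h r) = v r" if "r \<in> T" for r
    using that inj unfolding w_def T_def by (auto simp: the_inv_into_f_f)
  let ?g = "\<lambda>r c. cnj (v r) * M $$ (h r, h c) * v c"
  have "quad_form n N v = (\<Sum>r\<in>T. \<Sum>c\<in>T. cnj (v r) * N $$ (r,c) * v c)"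
    unfolding quad_form_def by (rule sum_square_mono_neutral) (auto simp: T_def N_entries)
  also have "\<dots> = of_real s * (\<Sum>r\<in>T. \<Sum>c\<in>T. ?g r c)"
    unfolding sum_distrib_left T_def by (intro sum.cong refl) (auto simp: N_entries algebra_simps)
  finally have N_form: "quad_form n N v = of_real s * (\<Sum>r\<in>T. \<Sum>c\<in>T. ?g r c)" .
  let ?f = "\<lambda>i j. cnj (w i) * M $$ (i,j) * w j"
  have "quad_form m M w = (\<Sum>i\<in>h`T. \<Sum>j\<in>h`T. ?f i j)"
    unfolding quad_form_def using hT by (intro sum_square_mono_neutral) (auto simp: w_def)
  also have "\<dots> = (\<Sum>r\<in>T. \<Sum>c\<in>T. ?g r c)"
    using inj unfolding T_def by (simp add: sum.reindex w_h[unfolded T_def])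
  finally have "quad_form m M w = (\<Sum>r\<in>T. \<Sum>c\<in>T. ?g r c)" .
  then show "Im (quad_form n N v) = 0 \<and> 0 \<le> Re (quad_form n N v)"
    unfolding N_form using psd_quad_form[OF M, of w] s by simp
qed

definition diag_block :: "nat \<Rightarrow> nat \<Rightarrow> complex mat \<Rightarrow> complex mat" where
  "diag_block d a M = mat d d (\<lambda>(b,b'). M $$ (a*d + b, a*d + b'))"

lemma diag_block_carrier [simp]: "diag_block d a M \<in> carrier_mat d d"
  unfolding diag_block_def by simp

lemma tr_diag_block: "tr (diag_block d a M) = (\<Sum>b<d. M $$ (a*d + b, a*d + b))"
  unfolding tr_def diag_block_def by simp

lemma ptrace_second_diag_entry:
  "a < dA \<Longrightarrow> ptrace_second dA dB M $$ (a,a) = tr (diag_block dB a M)"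
  unfolding ptrace_second_def diag_block_def tr_def by simp

lemma tr_sum_diag_block:
  "M \<in> carrier_mat (dA*dB) (dA*dB) \<Longrightarrow> tr M = (\<Sum>a<dA. tr (diag_block dB a M))"
  unfolding tr_def diag_block_def by (simp add: sum_lessThan_mult_split)

lemma psd_tr_diag_block:
  assumes "psd (dA*dB) M" "a < dA"
  shows "Im (tr (diag_block dB a M)) = 0 \<and> 0 \<le> Re (tr (diag_block dB a M))"
  using psd_diag_nonneg[OF assms(1) mult_add_less_mult[OF assms(2)]]
  unfolding tr_def diag_block_def by (auto simp: Im_sum Re_sum intro: sum_nonneg)

lemma psd_diag_block_tr_zero:
  assumes "psd (dA*dB) M" "a < dA" "tr (diag_block dB a M) = 0" "b < dB"
  shows "M $$ (a*dB + b, a*dB + b) = 0"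
proof -
  have diag: "Im (M $$ (a*dB + b', a*dB + b')) = 0 \<and> 0 \<le> Re (M $$ (a*dB + b', a*dB + b'))"
    if "b' < dB" for b'
    using psd_diag_nonneg[OF assms(1) mult_add_less_mult[OF assms(2) that]] .
  have "(\<Sum>b'<dB. Re (M $$ (a*dB + b', a*dB + b'))) = 0"
    using arg_cong[OF assms(3), of Re] unfolding tr_def diag_block_def by (simp add: Re_sum)
  then have "Re (M $$ (a*dB + b, a*dB + b)) = 0"
    using diag assms(4) by (subst (asm) sum_nonneg_eq_0_iff) auto
  then show ?thesis using diag[OF assms(4)] by (simp add: complex_eq_iff)
qed

lemma linear_map_scaled_diag_block:
  assumes "linear_map din (dA*dB) R" "a < dA"
  shows "linear_map din dB (\<lambda>M. x \<cdot>\<^sub>m diag_block dB a (R M))"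
proof -
  have in_block: "a*dB + b < dA*dB" if "b < dB" for b
    using mult_add_less_mult[OF assms(2) that] .
  show ?thesis
    unfolding linear_map_def diag_block_def
    by (auto intro!: eq_matI simp: in_block ring_distribs
        linear_map_entry_add[OF assms(1)] linear_map_entry_smult[OF assms(1)])
qed

text \<open>Restricting the output of \<open>id\<^sub>k \<otimes> R\<close> to the block of \<open>a\<close> is a compression along
  \<open>r \<mapsto> (r div dB) (dA dB) + a dB + r mod dB\<close>.\<close>
lemma CP_scaled_diag_block:
  assumes "CP din (dA*dB) R" "a < dA" "0 < dB" "0 \<le> s"
  shows "CP din dB (\<lambda>M. of_real s \<cdot>\<^sub>m diag_block dB a (R M))"
  unfolding CP_def
proof (intro allI impI)
  fix k :: nat and M :: "complex mat"
  assume "1 \<le> k" "psd (k*din) M"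
  then have psd_ampl: "psd (k*(dA*dB)) (ampl k din (dA*dB) R M)"
    using assms(1) unfolding CP_def by blast
  define h where "h r = (r div dB)*(dA*dB) + (a*dB + r mod dB)" for r
  have in_block: "a*dB + r mod dB < dA*dB" for r
    using mult_add_less_mult[OF assms(2)] assms(3) by simp
  have h_div: "h r div (dA*dB) = r div dB" for r
    unfolding h_def using in_block[of r] assms(2,3) by (subst div_mult_self3) auto
  have h_mod: "h r mod (dA*dB) = a*dB + r mod dB" for r
    unfolding h_def using in_block[of r] by (subst mod_mult_self3) auto
  have h_less: "h r < k*(dA*dB)" if "r < k*dB" for r
    unfolding h_def using mult_add_less_mult[OF _ in_block, of "r div dB" k] that
    by (simp add: less_mult_imp_div_less)
  show "psd (k*dB) (ampl k din dB (\<lambda>M. of_real s \<cdot>\<^sub>m diag_block dB a (R M)) M)"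
  proof (rule psd_compression[OF psd_ampl _ assms(4), where S = UNIV and h = h])
    show "inj_on h ({..<k*dB} \<inter> UNIV)"
      by (rule inj_onI) (metis h_div h_mod div_mult_mod_eq add_left_cancel)
  qed (use h_less assms(3) in \<open>auto simp: ampl_def diag_block_def h_div h_mod\<close>)
qed

definition prepare_basis :: "nat \<Rightarrow> nat \<Rightarrow> complex mat \<Rightarrow> complex mat" where
  "prepare_basis d a M = M $$ (0,0) \<cdot>\<^sub>m ketbra d a a"

lemma ketbra_index:
  "i < d \<Longrightarrow> j < d \<Longrightarrow> ketbra d x y $$ (i,j) = (if i = x \<and> j = y then 1 else 0)"
  unfolding ketbra_def by simp

lemma prepare_basis_index:
  "i < d \<Longrightarrow> j < d \<Longrightarrow> prepare_basis d a M $$ (i,j) = (if i = a \<and> j = a then M $$ (0,0) else 0)"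
  unfolding prepare_basis_def ketbra_def by simp

lemma CP_prepare_basis:
  assumes "a < d"
  shows "CP 1 d (prepare_basis d a)"
  unfolding CP_def
proof (intro allI impI)
  fix k :: nat and M :: "complex mat"
  assume "psd (k*1) M"
  then show "psd (k*d) (ampl k 1 d (prepare_basis d a) M)"
  proof (rule psd_compression[where S = "{r. r mod d = a}" and h = "\<lambda>r. r div d" and s = 1])
    show "inj_on (\<lambda>r. r div d) ({..<k*d} \<inter> {r. r mod d = a})"
      by (rule inj_onI) (metis IntD2 div_mult_mod_eq mem_Collect_eq)
  qed (use assms in \<open>auto simp: ampl_def prepare_basis_def ketbra_def less_mult_imp_div_less\<close>)
qed

lemma tr_ketbra_diag: "a < d \<Longrightarrow> tr (ketbra d a a) = 1"
  using density_ketbra unfolding density_def by blast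

lemma is_single_prepare_basis:
  assumes "fst X = 1" "a < fst A"
  shows "is_single X A (prepare_basis (fst A) a)"
  unfolding is_single_def Let_def assms(1)
proof (intro conjI)
  show "linear_map 1 (fst A) (prepare_basis (fst A) a)"
    unfolding linear_map_def prepare_basis_def by (auto intro!: eq_matI simp: ketbra_def)
  show "CP 1 (fst A) (prepare_basis (fst A) a)"
    using assms(2) by (rule CP_prepare_basis)
  show "\<forall>M\<in>carrier_mat 1 1. tr (prepare_basis (fst A) a M) = tr M"
  proof
    fix M :: "complex mat"
    assume "M \<in> carrier_mat 1 1"
    then have "tr M = M $$ (0,0)" unfolding tr_def by simp
    then show "tr (prepare_basis (fst A) a M) = tr M"
      using assms(2) by (simp add: prepare_basis_def tr_smult[OF ketbra_carrier] tr_ketbra_diag)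
  qed
qed (auto simp: prepare_basis_def ketbra_def)

lemma tensor_map_prepare_basis:
  assumes "linear_map dY dB RB" "M \<in> carrier_mat dY dY" "r < dA*dB" "c < dA*dB"
  shows "tensor_map 1 dY dA dB (prepare_basis dA a) RB M $$ (r,c) =
    (if r div dB = a \<and> c div dB = a then RB M $$ (r mod dB, c mod dB) else 0)"
proof -
  have "0 < dB" using assms(3) by (cases "dB = 0") auto
  then have "r mod dB < dB" "c mod dB < dB" by simp_all
  moreover have "r div dB < dA" "c div dB < dA"
    using assms(3,4) by (simp_all add: less_mult_imp_div_less)
  ultimately show ?thesis
    unfolding tensor_map_def
    using assms(3,4) linear_map_entry_expansion[OF assms(1,2)]
    by (auto simp: prepare_basis_index ketbra_index)
qed

locale trivial_classical_resource =
  fixes X Y A B :: sys and R :: "complex mat \<Rightarrow> complex mat"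
  assumes resource: "is_resource X Y A B R"
    and X_dim: "fst X = 1" and A_classical: "snd A = TC"
    and Y_dim: "0 < fst Y" and B_dim: "0 < fst B"
begin

abbreviation "dY \<equiv> fst Y"
abbreviation "dA \<equiv> fst A"
abbreviation "dB \<equiv> fst B"

lemmas resource_unfolded = resource[unfolded is_resource_def Let_def X_dim]

lemma R_linear: "linear_map dY (dA*dB) R"
  using resource_unfolded by simp

lemma R_CP: "CP dY (dA*dB) R"
  using resource_unfolded by simp

lemma R_unit_input: "\<psi> \<in> carrier_mat dY dY \<Longrightarrow> R (tensor_mat 1 dY (1\<^sub>m 1) \<psi>) = R \<psi>"
  using tensor_mat_unit_left[of \<psi> dY] by simp

lemma R_trace:
  assumes "density dY \<psi>"
  shows "tr (R \<psi>) = 1"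
proof -
  have "\<forall>\<xi> \<psi>. density 1 \<xi> \<and> density dY \<psi> \<longrightarrow> tr (R (tensor_mat 1 dY \<xi> \<psi>)) = 1"
    using resource_unfolded by (elim conjE)
  then have "tr (R (tensor_mat 1 dY (1\<^sub>m 1) \<psi>)) = 1"
    using assms density_unit by blast
  then show ?thesis by (simp only: R_unit_input density_carrier assms)
qed

lemma R_no_signalling:
  assumes "density dY \<psi>" "density dY \<psi>'"
  shows "ptrace_second dA dB (R \<psi>) = ptrace_second dA dB (R \<psi>')"
proof -
  have "\<forall>\<xi> \<psi> \<psi>'. density 1 \<xi> \<and> density dY \<psi> \<and> density dY \<psi>' \<longrightarrow>
      ptrace_second dA dB (R (tensor_mat 1 dY \<xi> \<psi>)) = ptrace_second dA dB (R (tensor_mat 1 dY \<xi> \<psi>'))"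
    using resource_unfolded by (elim conjE)
  then have "ptrace_second dA dB (R (tensor_mat 1 dY (1\<^sub>m 1) \<psi>)) =
      ptrace_second dA dB (R (tensor_mat 1 dY (1\<^sub>m 1) \<psi>'))"
    using assms density_unit by blast
  then show ?thesis by (simp only: R_unit_input density_carrier assms)
qed

lemma R_A_classical:
  assumes "density dY \<psi>" "r < dA*dB" "c < dA*dB" "r div dB \<noteq> c div dB"
  shows "R \<psi> $$ (r,c) = 0"
proof -
  have "\<forall>\<xi> \<psi>. density 1 \<xi> \<and> density dY \<psi> \<longrightarrow> (\<forall>i<dA. \<forall>j<dA. i \<noteq> j \<longrightarrow> (\<forall>b<dB. \<forall>b'<dB.
      R (tensor_mat 1 dY \<xi> \<psi>) $$ (i*dB + b, j*dB + b') = 0))"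
    using resource_unfolded A_classical by (elim conjE) simp
  then have "R (tensor_mat 1 dY (1\<^sub>m 1) \<psi>) $$ ((r div dB)*dB + r mod dB, (c div dB)*dB + c mod dB) = 0"
    using assms density_unit mod_less_divisor[OF B_dim]
      less_mult_imp_div_less[OF assms(2)] less_mult_imp_div_less[OF assms(3)] by blast
  then show ?thesis by (simp only: div_mult_mod_eq R_unit_input density_carrier assms)
qed

lemma R_B_classical:
  assumes "snd B = TC" "density dY \<psi>" "a < dA" "b < dB" "b' < dB" "b \<noteq> b'"
  shows "R \<psi> $$ (a*dB + b, a*dB + b') = 0"
proof -
  have "\<forall>\<xi> \<psi>. density 1 \<xi> \<and> density dY \<psi> \<longrightarrow> (\<forall>i<dB. \<forall>j<dB. i \<noteq> j \<longrightarrow> (\<forall>a<dA. \<forall>a'<dA.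
      R (tensor_mat 1 dY \<xi> \<psi>) $$ (a*dB + i, a'*dB + j) = 0))"
    using resource_unfolded assms(1) by (elim conjE) simp
  then have "R (tensor_mat 1 dY (1\<^sub>m 1) \<psi>) $$ (a*dB + b, a*dB + b') = 0"
    using assms density_unit by blast
  then show ?thesis by (simp only: R_unit_input density_carrier assms)
qed

lemma R_Y_classical:
  assumes "snd Y = TC" "i < dY" "j < dY" "i \<noteq> j"
  shows "R (ketbra dY i j) = 0\<^sub>m (dA*dB) (dA*dB)"
proof -
  have "\<forall>\<xi>. density 1 \<xi> \<longrightarrow> (\<forall>i<dY. \<forall>j<dY. i \<noteq> j \<longrightarrow>
      R (tensor_mat 1 dY \<xi> (ketbra dY i j)) = 0\<^sub>m (dA*dB) (dA*dB))"
    using resource_unfolded assms(1) by (elim conjE) simp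
  then have "R (tensor_mat 1 dY (1\<^sub>m 1) (ketbra dY i j)) = 0\<^sub>m (dA*dB) (dA*dB)"
    using assms density_unit by blast
  then show ?thesis by (simp only: R_unit_input ketbra_carrier)
qed

lemma R_psd: "density dY \<psi> \<Longrightarrow> psd (dA*dB) (R \<psi>)"
  using CP_psd[OF R_CP R_linear] unfolding density_def by blast

lemma R_block_diagonal:
  assumes "M \<in> carrier_mat dY dY" "r < dA*dB" "c < dA*dB" "r div dB \<noteq> c div dB"
  shows "R M $$ (r,c) = 0"
  by (rule linear_map_entry_eq_0[OF R_linear assms(1-3)]) (simp add: R_A_classical assms(2-4))

text \<open>By no-signalling any density could serve as the reference input here.\<close>
definition weight :: "nat \<Rightarrow> real" where
  "weight a = Re (tr (diag_block dB a (R (ketbra dY 0 0))))"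

lemma density_ketbra_0: "density dY (ketbra dY 0 0)"
  using density_ketbra Y_dim by blast

lemma tr_diag_block_R_density:
  assumes "density dY \<psi>" "a < dA"
  shows "tr (diag_block dB a (R \<psi>)) = of_real (weight a)"
proof -
  have "tr (diag_block dB a (R \<psi>)) = tr (diag_block dB a (R (ketbra dY 0 0)))"
    using R_no_signalling[OF assms(1) density_ketbra_0] ptrace_second_diag_entry[OF assms(2)] by metis
  also have "\<dots> = of_real (weight a)"
    using psd_tr_diag_block[OF R_psd[OF density_ketbra_0] assms(2)] unfolding weight_def
    by (simp add: complex_eq_iff)
  finally show ?thesis .
qed

lemma weight_nonneg: "a < dA \<Longrightarrow> 0 \<le> weight a"
  using psd_tr_diag_block[OF R_psd[OF density_ketbra_0]] unfolding weight_def by blast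

lemma sum_weight: "(\<Sum>a<dA. weight a) = 1"
proof -
  have "1 = tr (R (ketbra dY 0 0))"
    using R_trace[OF density_ketbra_0] by simp
  also have "\<dots> = (\<Sum>a<dA. tr (diag_block dB a (R (ketbra dY 0 0))))"
    by (rule tr_sum_diag_block[OF linear_map_carrier[OF R_linear ketbra_carrier]])
  also have "\<dots> = (\<Sum>a<dA. of_real (weight a))"
    by (intro sum.cong refl) (simp add: tr_diag_block_R_density[OF density_ketbra_0])
  finally show ?thesis by (metis of_real_eq_1_iff of_real_sum)
qed

lemma tr_diag_block_R:
  assumes "M \<in> carrier_mat dY dY" "a < dA"
  shows "tr (diag_block dB a (R M)) = of_real (weight a) * tr M"
proof -
  have in_block: "a*dB + b < dA*dB" if "b < dB" for b
    using mult_add_less_mult[OF assms(2) that] .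
  let ?F = "\<lambda>M. tr (diag_block dB a (R M)) - of_real (weight a) * tr M"
  have "?F M = 0"
  proof (rule linear_functional_zero_on_densities[OF _ _ _ assms(1)])
    show "?F (M + N) = ?F M + ?F N" if "M \<in> carrier_mat dY dY" "N \<in> carrier_mat dY dY" for M N
    proof -
      have "tr (diag_block dB a (R (M + N))) = tr (diag_block dB a (R M)) + tr (diag_block dB a (R N))"
        unfolding tr_diag_block using that
        by (simp add: linear_map_entry_add[OF R_linear] in_block sum.distrib)
      then show ?thesis using that by (simp add: tr_add algebra_simps)
    qed
    show "?F (x \<cdot>\<^sub>m M) = x * ?F M" if "M \<in> carrier_mat dY dY" for x M
    proof -
      have "tr (diag_block dB a (R (x \<cdot>\<^sub>m M))) = x * tr (diag_block dB a (R M))"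
        unfolding tr_diag_block using that
        by (simp add: linear_map_entry_smult[OF R_linear] in_block sum_distrib_left)
      then show ?thesis using that by (simp add: tr_smult algebra_simps)
    qed
    show "?F \<psi> = 0" if "density dY \<psi>" for \<psi>
      using that assms(2) by (simp add: tr_diag_block_R_density density_def)
  qed
  then show ?thesis by simp
qed

lemma R_vanishes_on_null_block:
  assumes "M \<in> carrier_mat dY dY" "r < dA*dB" "c < dA*dB" "weight (r div dB) = 0"
  shows "R M $$ (r,c) = 0"
proof (rule linear_map_entry_eq_0[OF R_linear assms(1-3)])
  fix \<psi> assume \<psi>: "density dY \<psi>"
  have a: "r div dB < dA" using assms(2) by (simp add: less_mult_imp_div_less)
  have "R \<psi> $$ (r,r) = 0"
    using psd_diag_block_tr_zero[OF R_psd[OF \<psi>] a _ mod_less_divisor[OF B_dim, of r]]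
      tr_diag_block_R_density[OF \<psi> a] assms(4) by simp
  then show "R \<psi> $$ (r,c) = 0"
    using psd_zero_diag_row[OF R_psd[OF \<psi>] assms(2,3)] by blast
qed

definition bob_channel :: "nat \<Rightarrow> complex mat \<Rightarrow> complex mat" where
  "bob_channel a M = of_real (1 / weight a) \<cdot>\<^sub>m diag_block dB a (R M)"

lemma is_single_bob_channel:
  assumes "a < dA" "0 < weight a"
  shows "is_single Y B (bob_channel a)"
  unfolding is_single_def Let_def bob_channel_def[abs_def]
proof (intro conjI)
  show "linear_map dY dB (\<lambda>M. of_real (1 / weight a) \<cdot>\<^sub>m diag_block dB a (R M))"
    by (rule linear_map_scaled_diag_block[OF R_linear assms(1)])
  show "CP dY dB (\<lambda>M. of_real (1 / weight a) \<cdot>\<^sub>m diag_block dB a (R M))"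
    using assms(2) by (intro CP_scaled_diag_block[OF R_CP assms(1) B_dim]) simp
  show "\<forall>M\<in>carrier_mat dY dY. tr (of_real (1 / weight a) \<cdot>\<^sub>m diag_block dB a (R M)) = tr M"
    using assms by (simp add: tr_smult[OF diag_block_carrier] tr_diag_block_R)
  show "snd B = TC \<longrightarrow> (\<forall>\<xi>. density dY \<xi> \<longrightarrow> (\<forall>i<dB. \<forall>j<dB. i \<noteq> j \<longrightarrow>
      (of_real (1 / weight a) \<cdot>\<^sub>m diag_block dB a (R \<xi>)) $$ (i,j) = 0))"
    using assms(1) by (simp add: diag_block_def R_B_classical)
  show "snd Y = TC \<longrightarrow> (\<forall>i<dY. \<forall>j<dY. i \<noteq> j \<longrightarrow>
      of_real (1 / weight a) \<cdot>\<^sub>m diag_block dB a (R (ketbra dY i j)) = 0\<^sub>m dB dB)"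
    using mult_add_less_mult[OF assms(1)]
    by (auto simp: R_Y_classical diag_block_def intro!: eq_matI)
qed

lemma exists_positive_weight: "\<exists>a<dA. 0 < weight a"
proof (rule ccontr)
  assume "\<not> (\<exists>a<dA. 0 < weight a)"
  then have "(\<Sum>a<dA. weight a) \<le> 0" by (intro sum_nonpos) auto
  then show False using sum_weight by simp
qed

text \<open>Outcomes of weight zero do not contribute to the mixture, but Bob must still be assigned a
  channel for them; he borrows that of an outcome of positive weight.\<close>
definition bob :: "nat \<Rightarrow> complex mat \<Rightarrow> complex mat" where
  "bob a = bob_channel (if 0 < weight a then a else (SOME a'. a' < dA \<and> 0 < weight a'))"

lemma is_single_bob: "a < dA \<Longrightarrow> is_single Y B (bob a)"
  using is_single_bob_channel someI_ex[OF exists_positive_weight] unfolding bob_def by auto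

lemma linear_map_bob: "a < dA \<Longrightarrow> linear_map dY dB (bob a)"
  using is_single_bob unfolding is_single_def Let_def by blast

lemma R_entry_mixture:
  assumes "M \<in> carrier_mat dY dY" "r < dA*dB" "c < dA*dB"
  shows "R M $$ (r,c) =
    (\<Sum>a<dA. of_real (weight a) * tensor_map 1 dY dA dB (prepare_basis dA a) (bob a) M $$ (r,c))"
proof -
  have "(\<Sum>a<dA. of_real (weight a) * tensor_map 1 dY dA dB (prepare_basis dA a) (bob a) M $$ (r,c)) =
      (\<Sum>a<dA. of_real (weight a) *
        (if r div dB = a \<and> c div dB = a then bob a M $$ (r mod dB, c mod dB) else 0))"
    by (intro sum.cong refl) (simp only: tensor_map_prepare_basis[OF linear_map_bob assms] lessThan_iff)
  also have "\<dots> = R M $$ (r,c)"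
  proof (cases "r div dB = c div dB")
    case False
    then show ?thesis using R_block_diagonal[OF assms False] by (auto intro!: sum.neutral)
  next
    case True
    define a where "a = r div dB"
    have a: "a < dA" unfolding a_def using assms(2) by (simp add: less_mult_imp_div_less)
    have "(\<Sum>a'<dA. of_real (weight a') *
        (if r div dB = a' \<and> c div dB = a' then bob a' M $$ (r mod dB, c mod dB) else 0)) =
        of_real (weight a) * bob a M $$ (r mod dB, c mod dB)"
      using True unfolding a_def[symmetric] by (subst sum_lessThan_one_point[OF a]) auto
    also have "\<dots> = R M $$ (r,c)"
    proof (cases "0 < weight a")
      case True
      have "a*dB + r mod dB = r" "a*dB + c mod dB = c"
        unfolding a_def using \<open>r div dB = c div dB\<close> by (metis div_mult_mod_eq)+
      then show ?thesis
        using True B_dim by (simp add: bob_def bob_channel_def diag_block_def)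
    next
      case False
      then have "weight a = 0" using weight_nonneg[OF a] by simp
      then show ?thesis using R_vanishes_on_null_block[OF assms] unfolding a_def by simp
    qed
    finally show ?thesis .
  qed
  finally show ?thesis by simp
qed

theorem LOSR_free: "LOSR_free X Y A B R"
  unfolding LOSR_free_def X_dim
proof (intro exI conjI)
  show "\<forall>a<dA. 0 \<le> weight a" using weight_nonneg by blast
  show "(\<Sum>a<dA. weight a) = 1" by (rule sum_weight)
  show "\<forall>a<dA. is_single X A (prepare_basis dA a) \<and> is_single Y B (bob a)"
    using is_single_prepare_basis[OF X_dim] is_single_bob by blast
  show "\<forall>M\<in>carrier_mat (1*dY) (1*dY). R M = mat (dA*dB) (dA*dB) (\<lambda>rc. \<Sum>a<dA. of_real (weight a) *
      tensor_map 1 dY dA dB (prepare_basis dA a) (bob a) M $$ rc)"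
    using R_entry_mixture linear_map_carrier[OF R_linear, THEN carrier_matD(1)]
      linear_map_carrier[OF R_linear, THEN carrier_matD(2)]
    by (auto intro!: eq_matI)
qed

end

theorem proposition1:
  fixes X Y A B :: sys
  assumes "valid_sys X" and "valid_sys Y" and "valid_sys A" and "valid_sys B"
    and "snd X = TI" and "snd A = TC"
  shows "T_trivial X Y A B"
  unfolding T_trivial_def
proof (intro allI impI)
  fix R assume "is_resource X Y A B R"
  moreover have "fst X = 1" "0 < fst Y" "0 < fst B"
    using assms(1,2,4,5) unfolding valid_sys_def by auto
  ultimately have "trivial_classical_resource X Y A B R"
    using assms(6) by unfold_locales
  then show "LOSR_free X Y A B R" by (rule trivial_classical_resource.LOSR_free)
qed

end
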